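(* Let $X$ and $Y$ be metric spaces with $X$ complete, and let $f\colon X\to Y$ be a continuous open surjection. Then $f$ is density-surjective, i.e. there exists a subset $Z\subset X$ such that $\mathrm{dens}(Z)=\mathrm{dens}(Y)$ and $f|_Z\colon Z\to Y$ is surjective.
   Context: For a metric space $W$, $\mathrm{dens}(W)$ (the density character) denotes the smallest cardinality of a dense subset of $W$. A map $f\colon X\to Y$ between metric spaces is called density-surjective if there is a subset $Z\subset X$ with $\mathrm{dens}(Z)=\mathrm{dens}(Y)$ such that $f|_Z\colon Z\to Y$ is surjective. A map is open if it maps open sets to open sets. *)

theory Defs
  imports "HOL-Analysis.Analysis"
begin

definition dense_subset :: "'a::metric_space set \<Rightarrow> 'a set \<Rightarrow> bool" where
  "dense_subset D W \<longleftrightarrow> D \<subseteq> W \<and> W \<subseteq> closure D"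

text \<open>Density character of W: the cardinal (card_of well-order) of a dense subset of W
  of minimal cardinality. Cardinals are compared up to ordIso.\<close>
definition dens :: "'a::metric_space set \<Rightarrow> 'a rel" where
  "dens W = (SOME r. \<exists>D. dense_subset D W \<and> r = card_of D \<and>
                         (\<forall>E. dense_subset E W \<longrightarrow> (card_of D, card_of E) \<in> ordLeq))"

end

(*
  Take a dense set D \<subseteq> Y of cardinality dens Y. Openness of f allows lifting points of D
  with control: near any t \<in> X and for each d \<in> D and radius 1/(j+1) choose t' close to t
  with f t' = d such that f maps a small ball around t' onto the ball of radius 1/(j+1)
  around d. Iterating this with radii 2^-n produces sets S_n of size at most |D|, and every
  y \<in> Y is the image of the limit of a sequence x_n \<in> S_n with dist x_n x_(n+1) < 2^-n,
  which converges because X is complete. So f maps Z = closure (\<Union>n. S_n) onto Y, whence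
  dens Z \<le> |\<Union>n. S_n| \<le> dens Y; conversely dens Y \<le> dens Z because continuous
  images do not increase the density character. (If D is finite then Y = D is finite and
  finitely many preimages suffice.)
*)
theory Submission imports Defs begin

unbundle cardinal_syntax

lemma dens_attained:
  fixes W :: "'a::metric_space set"
  shows "\<exists>D. dense_subset D W \<and> dens W = card_of D \<and>
           (\<forall>E. dense_subset E W \<longrightarrow> card_of D \<le>o card_of E)"
proof -
  have "\<exists>r \<in> {card_of D | D. dense_subset D W}. \<forall>r' \<in> {card_of D | D. dense_subset D W}. r \<le>o r'"
    by (rule exists_minim_Well_order)
      (auto simp: dense_subset_def card_of_Well_order, meson closure_subset order_refl)
  then have "\<exists>r. \<exists>D. dense_subset D W \<and> r = card_of D \<and>
               (\<forall>E. dense_subset E W \<longrightarrow> card_of D \<le>o card_of E)"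
    by blast
  from someI_ex[OF this] show ?thesis
    unfolding dens_def by blast
qed

lemma dens_ordLeq_card_of:
  assumes "dense_subset D W"
  shows "dens W \<le>o card_of D"
proof -
  obtain D' where "dens W = card_of D'" "\<And>E. dense_subset E W \<Longrightarrow> card_of D' \<le>o card_of E"
    using dens_attained[of W] by blast
  with assms show ?thesis
    by simp
qed

lemma dense_subset_closure: "dense_subset S (closure S)"
  by (simp add: dense_subset_def closure_subset)

lemma dens_image_ordLeq:
  assumes "continuous_on (closure Z) f"
  shows "dens (f ` Z) \<le>o dens Z"
proof -
  obtain E where E: "dense_subset E Z" "dens Z = card_of E"
    using dens_attained[of Z] by blast
  then have "E \<subseteq> Z" "Z \<subseteq> closure E"
    by (auto simp: dense_subset_def)
  then have "continuous_on (closure E) f"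
    by (intro continuous_on_subset[OF assms] closure_mono)
  then have "f ` closure E \<subseteq> closure (f ` E)"
    by (rule image_closure_subset[OF _ closed_closure closure_subset])
  with \<open>E \<subseteq> Z\<close> \<open>Z \<subseteq> closure E\<close> have "dense_subset (f ` E) (f ` Z)"
    by (auto simp: dense_subset_def)
  then have "dens (f ` Z) \<le>o card_of (f ` E)"
    by (rule dens_ordLeq_card_of)
  also have "card_of (f ` E) \<le>o card_of E"
    by (rule card_of_image)
  finally show ?thesis
    using E(2) by simp
qed

lemma Cauchy_if_summable_dist_Suc:
  fixes x :: "nat \<Rightarrow> 'a::metric_space"
  assumes "summable d" "\<And>n. dist (x n) (x (Suc n)) \<le> d n"
  shows "Cauchy x"
proof (rule metric_CauchyI)
  have chain: "dist (x m) (x n) \<le> sum d {m..<n}" if "m \<le> n" for m n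
    using that
  proof (induction n rule: dec_induct)
    case (step n)
    have "dist (x m) (x (Suc n)) \<le> dist (x m) (x n) + dist (x n) (x (Suc n))"
      by (rule dist_triangle)
    also have "\<dots> \<le> sum d {m..<n} + d n"
      using step.IH assms(2) by (rule add_mono)
    finally show ?case
      using step.hyps by simp
  qed simp
  fix e :: real
  assume "e > 0"
  with assms(1) obtain N where N: "\<And>m n. m \<ge> N \<Longrightarrow> norm (sum d {m..<n}) < e"
    unfolding summable_Cauchy by blast
  have less: "dist (x m) (x n) < e" if "N \<le> m" "m \<le> n" for m n
    using chain[OF that(2)] N[OF that(1), of n] by simp
  show "\<exists>M. \<forall>m\<ge>M. \<forall>n\<ge>M. dist (x m) (x n) < e"
  proof (intro exI allI impI)
    fix m n assume "N \<le> m" "N \<le> n"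
    then show "dist (x m) (x n) < e"
      using less[of m n] less[of n m] by (cases "m \<le> n") (simp_all add: dist_commute)
  qed
qed

definition lift_point ::
    "('a::metric_space \<Rightarrow> 'b::metric_space) \<Rightarrow> 'a set \<Rightarrow> real \<Rightarrow> 'b \<Rightarrow> nat \<Rightarrow> 'a" where
  "lift_point f A r d j = (SOME t. t \<in> A \<and> f t = d \<and> ball d (1 / Suc j) \<subseteq> f ` ball t r)"

lemma open_map_lift_near_point:
  fixes f :: "'a::metric_space \<Rightarrow> 'b::metric_space"
  assumes opn: "\<forall>U. open U \<longrightarrow> open (f ` U)"
    and dense: "UNIV \<subseteq> closure D"
    and "x \<in> A" "open A" "r > 0"
  shows "\<exists>d\<in>D. \<exists>j. dist d (f x) < r \<and> f x \<in> ball d (1 / Suc j) \<and>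
           (\<exists>t\<in>A. f t = d \<and> ball d (1 / Suc j) \<subseteq> f ` ball t r)"
proof -
  obtain e where e: "e > 0" "ball x e \<subseteq> A"
    using assms open_contains_ball by blast
  define \<delta> where "\<delta> = min e (r / 2)"
  have "\<delta> > 0" "ball x \<delta> \<subseteq> A"
    using e \<open>r > 0\<close> by (auto simp: \<delta>_def)
  have "open (f ` ball x \<delta>)" "f x \<in> f ` ball x \<delta>"
    using opn \<open>\<delta> > 0\<close> by auto
  then obtain \<eta> where \<eta>: "\<eta> > 0" "ball (f x) \<eta> \<subseteq> f ` ball x \<delta>"
    using open_contains_ball by blast
  obtain j :: nat where j: "1 / Suc j < min (\<eta> / 2) r"
    using reals_Archimedean[of "min (\<eta> / 2) r"] \<eta>(1) \<open>r > 0\<close> by (auto simp: inverse_eq_divide)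
  obtain d where d: "d \<in> D" "dist d (f x) < 1 / Suc j"
    using dense closure_approachable[of "f x" D] by (metis UNIV_I divide_pos_pos of_nat_0_less_iff
        subsetD zero_less_Suc zero_less_one)
  have ball_d: "ball d (1 / Suc j) \<subseteq> ball (f x) \<eta>"
  proof
    fix z
    assume "z \<in> ball d (1 / Suc j)"
    then have "dist (f x) z < 2 / Suc j"
      using d(2) dist_triangle[of "f x" z d] by (simp add: dist_commute)
    then show "z \<in> ball (f x) \<eta>"
      using j by simp
  qed
  moreover have "d \<in> ball d (1 / Suc j)"
    by simp
  ultimately have "d \<in> f ` ball x \<delta>"
    using \<eta>(2) by blast
  then obtain t where t: "t \<in> ball x \<delta>" "f t = d"
    by blast
  have "ball x \<delta> \<subseteq> ball t r"
  proof
    fix z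
    assume "z \<in> ball x \<delta>"
    then have "dist t z < 2 * \<delta>"
      using t(1) dist_triangle[of t z x] by (simp add: dist_commute)
    then show "z \<in> ball t r"
      by (simp add: \<delta>_def)
  qed
  then have "ball d (1 / Suc j) \<subseteq> f ` ball t r"
    using ball_d \<eta>(2) by blast
  moreover have "dist d (f x) < r" "f x \<in> ball d (1 / Suc j)"
    using d(2) j by (auto simp: dist_commute)
  ultimately show ?thesis
    using d(1) t \<open>ball x \<delta> \<subseteq> A\<close> by blast
qed

lemma lift_point_spec:
  assumes "\<exists>t\<in>A. f t = d \<and> ball d (1 / Suc j) \<subseteq> f ` ball t r"
  shows "lift_point f A r d j \<in> A \<and> f (lift_point f A r d j) = d \<and>
         ball d (1 / Suc j) \<subseteq> f ` ball (lift_point f A r d j) r"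
  unfolding lift_point_def by (rule someI_ex) (use assms in blast)

lemma open_map_lift_point:
  fixes f :: "'a::metric_space \<Rightarrow> 'b::metric_space"
  assumes "\<forall>U. open U \<longrightarrow> open (f ` U)" "UNIV \<subseteq> closure D" "x \<in> A" "open A" "r > 0"
  shows "\<exists>d\<in>D. \<exists>j. dist d (f x) < r \<and> lift_point f A r d j \<in> A \<and>
           f (lift_point f A r d j) = d \<and> f x \<in> f ` ball (lift_point f A r d j) r"
proof -
  obtain d j where "d \<in> D" "dist d (f x) < r" "f x \<in> ball d (1 / Suc j)"
    and "\<exists>t\<in>A. f t = d \<and> ball d (1 / Suc j) \<subseteq> f ` ball t r"
    using open_map_lift_near_point[OF assms] by blast
  with lift_point_spec[OF this(4)] show ?thesis
    by blast
qed

primrec lifted_points :: "('a::metric_space \<Rightarrow> 'b::metric_space) \<Rightarrow> 'b set \<Rightarrow> nat \<Rightarrow> 'a set" where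
  "lifted_points f D 0 = (\<Union>d\<in>D. range (lift_point f UNIV 1 d))"
| "lifted_points f D (Suc n) =
     (\<Union>s\<in>lifted_points f D n. \<Union>d\<in>D. range (lift_point f (ball s ((1/2)^n)) ((1/2)^Suc n) d))"

lemma card_of_lifted_points_ordLeq:
  fixes f :: "'a::metric_space \<Rightarrow> 'b::metric_space" and D :: "'b set"
  assumes "infinite D"
  shows "card_of (lifted_points f D n) \<le>o card_of D"
proof -
  have "card_of (UNIV :: nat set) \<le>o card_of D"
    using assms infinite_iff_card_of_nat by blast
  then have "card_of (range g) \<le>o card_of D" for g :: "nat \<Rightarrow> 'a"
    using card_of_image ordLeq_transitive by blast
  then have "card_of (\<Union>d\<in>D. range (g d)) \<le>o card_of D" for g :: "'b \<Rightarrow> nat \<Rightarrow> 'a"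
    by (intro card_of_UNION_ordLeq_infinite[OF assms] ordIso_imp_ordLeq[OF card_of_refl]) blast
  then show ?thesis
    by (induction n) (auto intro: card_of_UNION_ordLeq_infinite[OF assms])
qed

lemma lifted_points_sequence:
  fixes f :: "'a::metric_space \<Rightarrow> 'b::metric_space"
  assumes opn: "\<forall>U. open U \<longrightarrow> open (f ` U)" and dense: "UNIV \<subseteq> closure D"
    and "f x0 = y"
  obtains x where "\<And>n. x n \<in> lifted_points f D n"
    "\<And>n. dist (x n) (x (Suc n)) < (1/2)^n" "\<And>n. dist (f (x (Suc n))) y < (1/2)^Suc n"
proof -
  define P where "P n t \<longleftrightarrow> t \<in> lifted_points f D n \<and> y \<in> f ` ball t ((1/2)^n)" for n t
  have "\<exists>t. P 0 t"
    using open_map_lift_point[OF opn dense, of x0 UNIV 1] assms(3) by (auto simp: P_def)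
  moreover have "\<exists>t'. P (Suc n) t' \<and> dist t t' < (1/2)^n \<and> dist (f t') y < (1/2)^Suc n"
    if "P n t" for n t
  proof -
    from that obtain x' where "x' \<in> ball t ((1/2)^n)" "f x' = y" "t \<in> lifted_points f D n"
      by (auto simp: P_def)
    then obtain d j where "d \<in> D" "dist d y < (1/2)^Suc n"
      and t': "lift_point f (ball t ((1/2)^n)) ((1/2)^Suc n) d j \<in> ball t ((1/2)^n)"
        "f (lift_point f (ball t ((1/2)^n)) ((1/2)^Suc n) d j) = d"
        "y \<in> f ` ball (lift_point f (ball t ((1/2)^n)) ((1/2)^Suc n) d j) ((1/2)^Suc n)"
      using open_map_lift_point[OF opn dense, of x' "ball t ((1/2)^n)" "(1/2)^Suc n"] by auto
    moreover have "lift_point f (ball t ((1/2)^n)) ((1/2)^Suc n) d j \<in> lifted_points f D (Suc n)"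
      using \<open>t \<in> lifted_points f D n\<close> \<open>d \<in> D\<close> by auto
    ultimately show ?thesis
      unfolding P_def by (intro exI[of _ "lift_point f (ball t ((1/2)^n)) ((1/2)^Suc n) d j"]) simp
  qed
  ultimately obtain x where
    "\<And>n. P n (x n) \<and> dist (x n) (x (Suc n)) < (1/2)^n \<and> dist (f (x (Suc n))) y < (1/2)^Suc n"
    using dependent_nat_choice[of P "\<lambda>n t t'. dist t t' < (1/2)^n \<and> dist (f t') y < (1/2)^Suc n"]
    by blast
  then show ?thesis
    using that unfolding P_def by blast
qed

lemma image_closure_lifted_points:
  fixes f :: "'a::complete_space \<Rightarrow> 'b::metric_space"
  assumes cont: "continuous_on UNIV f" and opn: "\<forall>U. open U \<longrightarrow> open (f ` U)"
    and "surj f" and dense: "UNIV \<subseteq> closure D"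
  shows "f ` closure (\<Union>n. lifted_points f D n) = UNIV"
proof -
  have "y \<in> f ` closure (\<Union>n. lifted_points f D n)" for y
  proof -
    obtain x0 where "f x0 = y"
      using \<open>surj f\<close> by (metis surjD)
    obtain x where x: "\<And>n. x n \<in> lifted_points f D n"
      "\<And>n. dist (x n) (x (Suc n)) < (1/2)^n" "\<And>n. dist (f (x (Suc n))) y < (1/2)^Suc n"
      using lifted_points_sequence[OF opn dense \<open>f x0 = y\<close>] by blast
    have "Cauchy x"
      by (rule Cauchy_if_summable_dist_Suc[of "\<lambda>n. (1/2)^n"])
        (use x(2) in \<open>auto intro: summable_geometric less_imp_le\<close>)
    then obtain l where l: "x \<longlonglongrightarrow> l"
      using Cauchy_convergent_iff convergent_def by blast
    have half: "(\<lambda>n. (1/2::real)^Suc n) \<longlonglongrightarrow> 0"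
      by (rule LIMSEQ_Suc) (simp add: LIMSEQ_power_zero)
    have le: "\<forall>\<^sub>F n in sequentially. dist (f (x (Suc n))) y \<le> (1/2)^Suc n"
      using x(3) by (simp add: less_imp_le)
    have "(\<lambda>n. dist (f (x (Suc n))) y) \<longlonglongrightarrow> 0"
      by (rule tendsto_sandwich[OF _ le tendsto_const half]) simp
    then have "(\<lambda>n. f (x (Suc n))) \<longlonglongrightarrow> y"
      by (rule tendsto_dist_iff[THEN iffD2])
    moreover have "(\<lambda>n. f (x n)) \<longlonglongrightarrow> f l"
      using cont l by (simp add: continuous_on_eq_continuous_at isCont_tendsto_compose)
    ultimately have "f l = y"
      using LIMSEQ_Suc LIMSEQ_unique by blast
    moreover have "l \<in> closure (\<Union>n. lifted_points f D n)"
      using l x(1) by (auto intro!: closure_sequential[THEN iffD2])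
    ultimately show ?thesis
      by blast
  qed
  then show ?thesis
    by blast
qed

lemma continuous_open_surj_lift_dense:
  fixes f :: "'a::complete_space \<Rightarrow> 'b::metric_space" and D :: "'b set"
  assumes "continuous_on UNIV f" "\<forall>U. open U \<longrightarrow> open (f ` U)" "surj f"
    and dense: "UNIV \<subseteq> closure D"
  obtains S where "card_of S \<le>o card_of D" "f ` closure S = UNIV"
proof (cases "finite D")
  case True
  then have "D = UNIV"
    using dense closure_closed[OF finite_imp_closed[OF \<open>finite D\<close>]] by auto
  have "f ` range (inv f) = UNIV"
    using \<open>surj f\<close> by (simp add: image_image surj_f_inv_f)
  then have "f ` closure (range (inv f)) = UNIV"
    by (metis closure_subset image_mono top.extremum_unique)
  moreover have "card_of (range (inv f)) \<le>o card_of D"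
    unfolding \<open>D = UNIV\<close> by (rule card_of_image)
  ultimately show ?thesis
    using that by blast
next
  case False
  then have "card_of (\<Union>n. lifted_points f D n) \<le>o card_of D"
    by (intro card_of_UNION_ordLeq_infinite card_of_lifted_points_ordLeq ballI)
      (use infinite_iff_card_of_nat in auto)
  then show ?thesis
    using image_closure_lifted_points[OF assms] by (rule that)
qed

theorem theorem1p1:
  fixes f :: "'a::complete_space \<Rightarrow> 'b::metric_space"
  assumes "continuous_on UNIV f"
    and "\<forall>U. open U \<longrightarrow> open (f ` U)"
    and "surj f"
  shows "\<exists>Z. (dens Z, dens (UNIV :: 'b set)) \<in> ordIso \<and> f ` Z = UNIV"
proof -
  obtain D where D: "dense_subset D (UNIV :: 'b set)" "dens (UNIV :: 'b set) = card_of D"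
    using dens_attained[of "UNIV :: 'b set"] by blast
  then have "UNIV \<subseteq> closure D"
    by (simp add: dense_subset_def)
  then obtain S where S: "card_of S \<le>o card_of D" "f ` closure S = UNIV"
    by (rule continuous_open_surj_lift_dense[OF assms])
  have "dens (closure S) \<le>o card_of S"
    by (rule dens_ordLeq_card_of[OF dense_subset_closure])
  then have "dens (closure S) \<le>o dens (UNIV :: 'b set)"
    using S(1) D(2) ordLeq_transitive by fastforce
  moreover have "dens (UNIV :: 'b set) \<le>o dens (closure S)"
    using dens_image_ordLeq[of "closure S" f] S(2) assms(1) continuous_on_subset by fastforce
  ultimately show ?thesis
    using S(2) ordIso_iff_ordLeq by blast
qed

end
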